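(* Let $\alpha\in(0,1)$, $\alpha+\gamma>0$, $a,b>0$, and set $\eta_1:=\frac a2-\sqrt{\frac{a^2}{4}-b}$, $\eta_2:=\frac a2+\sqrt{\frac{a^2}4-b}$. Consider solutions of $$\big(\mathcal{D}^{(\alpha,\gamma)}_t\big)^2f(t)+a\,\mathcal{D}^{(\alpha,\gamma)}_tf(t)+b f(t)=0,\qquad t>0,$$ of the form $f(t)=\sum_{n\ge0}f_nt^{(\alpha+\gamma)n}$. If $b\ne a^2/4$, every such solution is $$f(t)=K_1\operatorname{E}_{\alpha,1+\gamma/\alpha,\gamma/\alpha}(-\eta_1t^{\alpha+\gamma})+K_2\operatorname{E}_{\alpha,1+\gamma/\alpha,\gamma/\alpha}(-\eta_2t^{\alpha+\gamma}),$$ with $K_1,K_2$ real if $a^2/4>b$, and complex with $K_1=\overline{K_2}$ if $a^2/4<b$ (for real $f$). If $b=a^2/4$, every such solution is $$f(t)=K_1'\operatorname{E}_{\alpha,1+\gamma/\alpha,\gamma/\alpha}(-(a/2)t^{\alpha+\gamma})+K_2'\,t^{\alpha+\gamma}\operatorname{E}^{(1)}_{\alpha,1+\gamma/\alpha,\gamma/\alpha}(-(a/2)t^{\alpha+\gamma}),$$ with $K_1',K_2'$ real constants.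
   Context: Caputo derivative for $0<\alpha<1$ and absolutely continuous $f$: ${}^C\!D^{(\alpha)}_tf(t)=\frac1{\Gamma(1-\alpha)}\int_0^t\frac{f'(\tau)}{(t-\tau)^\alpha}d\tau$. Stretched operator: $\mathcal{D}^{(\alpha,\gamma)}_t:=t^{-\gamma}\,{}^C\!D^{(\alpha)}_t$; $(\mathcal{D}^{(\alpha,\gamma)}_t)^2$ denotes its sequential (two-fold) application. In particular $\mathcal{D}^{(\alpha,\gamma)}_tt^\beta=\frac{\Gamma(\beta+1)}{\Gamma(\beta-\alpha+1)}t^{\beta-\alpha-\gamma}$ for $\beta\neq0$ and $\mathcal{D}^{(\alpha,\gamma)}_t1=0$. Kilbas–Saigo function: $\operatorname{E}_{a,m,l}(z)=1+\sum_{n\ge1}\prod_{k=1}^n\frac{\Gamma(1+a((k-1)m+l))}{\Gamma(1+a((k-1)m+l+1))}z^n$; $\operatorname{E}^{(1)}_{a,m,l}$ is its first derivative. *)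

theory Defs
  imports "HOL-Analysis.Analysis"
begin

definition caputo :: "real \<Rightarrow> (real \<Rightarrow> real) \<Rightarrow> real \<Rightarrow> real" where
  "caputo \<alpha> f t = 1 / Gamma (1 - \<alpha>) * integral {0..t} (\<lambda>\<tau>. deriv f \<tau> / (t - \<tau>) powr \<alpha>)"

definition stretched :: "real \<Rightarrow> real \<Rightarrow> (real \<Rightarrow> real) \<Rightarrow> real \<Rightarrow> real" where
  "stretched \<alpha> \<gamma> f t = t powr (-\<gamma>) * caputo \<alpha> f t"

definition ks_coeff :: "real \<Rightarrow> real \<Rightarrow> real \<Rightarrow> nat \<Rightarrow> real" where
  "ks_coeff a m l n =
     (\<Prod>k=1..n. Gamma (1 + a * ((real k - 1) * m + l)) / Gamma (1 + a * ((real k - 1) * m + l + 1)))"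

definition kilbas_saigo :: "real \<Rightarrow> real \<Rightarrow> real \<Rightarrow> complex \<Rightarrow> complex" where
  "kilbas_saigo a m l z = (\<Sum>n. complex_of_real (ks_coeff a m l n) * z ^ n)"

definition kilbas_saigo_deriv :: "real \<Rightarrow> real \<Rightarrow> real \<Rightarrow> complex \<Rightarrow> complex" where
  "kilbas_saigo_deriv a m l z = deriv (kilbas_saigo a m l) z"

end

theory Submission
  imports Defs
begin

text \<open>
  Put \<beta> = \<alpha> + \<gamma>. The Caputo derivative maps \<tau>^(\<beta>k) to
  \<Gamma>(\<beta>k+1) / \<Gamma>(\<beta>k+1-\<alpha>) \<tau>^(\<beta>k-\<alpha>); differentiating and integrating a power series in
  \<tau>^\<beta> term by term (dominated convergence against the Beta kernel) shows that the stretched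
  operator sends \<Sum> c_n t^(\<beta>n) to the series with coefficients C_(n+1) c_(n+1), where C_k is
  that Gamma ratio. By uniqueness of power series coefficients the equation becomes a three-term
  recurrence, and dividing c_n by the Kilbas-Saigo coefficient \<kappa>_n = 1 / (C_1 \<cdots> C_n) turns it into
  v_(n+2) + a v_(n+1) + b v_n = 0, whose characteristic roots are -\<eta>1 and -\<eta>2. The solutions
  K1 (-\<eta>1)^n + K2 (-\<eta>2)^n, resp. (K1 + K2 n) (-a/2)^n for a double root, resum to the
  Kilbas-Saigo functions; the factor n x^(n-1) yields t^\<beta> E1. The Kilbas-Saigo series is
  entire because C_k \<ge> (\<beta>k)^\<alpha>, which follows from the log-convexity of \<Gamma>.
\<close>

section \<open>Gamma and Beta functions\<close>

lemma has_integral_powr_Beta: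
  fixes s \<alpha> t :: real
  assumes s: "0 < s" and \<alpha>: "\<alpha> < 1" and t: "0 < t"
  shows "((\<lambda>\<tau>. \<tau> powr (s - 1) * (t - \<tau>) powr (- \<alpha>)) has_integral Beta s (1 - \<alpha>) * t powr (s - \<alpha>)) {0..t}"
proof -
  define g where "g u = u powr (s - 1) * (1 - u) powr (1 - \<alpha> - 1)" for u :: real
  have "(g has_integral Beta s (1 - \<alpha>)) {0..1}"
    unfolding g_def by (rule has_integral_Beta_real) (use s \<alpha> in auto)
  from has_integral_stretch_real[OF this, of "1 / t"]
  have "((\<lambda>\<tau>. g (\<tau> / t)) has_integral t * Beta s (1 - \<alpha>)) ((\<lambda>x. x * t) ` {0..1})"
    using t by simp
  moreover have "(\<lambda>x. x * t) ` {0..1} = {0..t}"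
    using image_mult_atLeastAtMost[of t 0 1] t by (simp add: mult.commute)
  ultimately have "((\<lambda>\<tau>. g (\<tau> / t)) has_integral t * Beta s (1 - \<alpha>)) {0..t}"
    by simp
  then have "((\<lambda>\<tau>. t powr (s - 1 - \<alpha>) * g (\<tau> / t)) has_integral
              t powr (s - 1 - \<alpha>) * (t * Beta s (1 - \<alpha>))) {0..t}"
    by (rule has_integral_mult_right)
  moreover have "t powr (s - 1 - \<alpha>) * g (\<tau> / t) = \<tau> powr (s - 1) * (t - \<tau>) powr (- \<alpha>)"
    if "\<tau> \<in> {0..t}" for \<tau>
  proof -
    have "1 - \<tau> / t = (t - \<tau>) / t" using t by (simp add: field_simps)
    then have "g (\<tau> / t) = \<tau> powr (s - 1) / t powr (s - 1) * ((t - \<tau>) powr (- \<alpha>) / t powr (- \<alpha>))"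
      using that t by (simp add: g_def powr_divide)
    then show ?thesis using t by (simp add: powr_diff powr_minus powr_add field_simps)
  qed
  moreover have "t powr (s - 1 - \<alpha>) * (t * Beta s (1 - \<alpha>)) = Beta s (1 - \<alpha>) * t powr (s - \<alpha>)"
    using t by (simp add: powr_diff powr_add field_simps)
  ultimately show ?thesis by (metis (no_types, lifting) has_integral_eq)
qed

lemma Beta_mult_div_Gamma:
  fixes \<alpha> x :: real
  assumes "\<alpha> < 1" and "0 < x"
  shows "x * Beta x (1 - \<alpha>) / Gamma (1 - \<alpha>) = Gamma (x + 1) / Gamma (x + 1 - \<alpha>)"
proof -
  have "Gamma (1 - \<alpha>) > 0" using assms by (intro Gamma_real_pos) simp
  moreover have "Gamma (x + 1) = x * Gamma x"
    by (rule Gamma_plus1) (use assms in \<open>auto elim!: nonpos_Ints_cases\<close>)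
  ultimately show ?thesis unfolding Beta_def by (simp add: algebra_simps)
qed

lemma Gamma_ratio_ge_powr:
  fixes \<alpha> x :: real
  assumes \<alpha>: "0 \<le> \<alpha>" "\<alpha> \<le> 1" and x: "0 < x"
  shows "x powr \<alpha> \<le> Gamma (x + 1) / Gamma (x + 1 - \<alpha>)"
proof -
  have "(ln \<circ> Gamma) ((1 - (1 - \<alpha>)) *\<^sub>R x + (1 - \<alpha>) *\<^sub>R (x + 1))
          \<le> (1 - (1 - \<alpha>)) * (ln \<circ> Gamma) x + (1 - \<alpha>) * (ln \<circ> Gamma) (x + 1)"
    by (rule convex_onD[OF log_convex_Gamma_real]) (use \<alpha> x in auto)
  moreover have "ln (Gamma (x + 1)) = ln x + ln (Gamma x)"
  proof -
    have "Gamma (x + 1) = x * Gamma x"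
      by (rule Gamma_plus1) (use x in \<open>auto elim!: nonpos_Ints_cases\<close>)
    then show ?thesis using x by (simp add: ln_mult_pos)
  qed
  ultimately have "ln (Gamma (x + 1 - \<alpha>)) \<le> ln (Gamma (x + 1)) - \<alpha> * ln x"
    by (simp add: algebra_simps)
  also have "\<dots> = ln (Gamma (x + 1) / x powr \<alpha>)"
    using x Gamma_real_pos[of "x + 1"] by (simp add: ln_div ln_powr del: Gamma_real_pos)
  finally have "Gamma (x + 1 - \<alpha>) \<le> Gamma (x + 1) / x powr \<alpha>"
    using x \<alpha> by (subst (asm) ln_le_cancel_iff) auto
  then show ?thesis using x \<alpha> by (simp add: field_simps)
qed

section \<open>Series and linear recurrences\<close>

lemma sums_integral_dominated:
  fixes g :: "nat \<Rightarrow> 'a::euclidean_space \<Rightarrow> real"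
  assumes int: "\<And>n. (g n has_integral I n) S"
    and conv: "\<And>x. x \<in> S \<Longrightarrow> (\<lambda>n. g n x) sums G x"
    and bound: "\<And>n x. x \<in> S \<Longrightarrow> \<bar>g n x\<bar> \<le> m n * w x"
    and m: "summable m" "\<And>n. 0 \<le> m n"
    and w: "w integrable_on S" "\<And>x. x \<in> S \<Longrightarrow> 0 \<le> w x"
  shows "I sums integral S G"
proof -
  have le: "norm (\<Sum>n<k. g n x) \<le> suminf m * w x" if x: "x \<in> S" for k x
  proof -
    have "norm (\<Sum>n<k. g n x) \<le> (\<Sum>n<k. m n * w x)"
      unfolding real_norm_def using bound[OF x] by (intro order.trans[OF sum_abs] sum_mono) auto
    also have "\<dots> = (\<Sum>n<k. m n) * w x"
      by (simp add: sum_distrib_right)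
    also have "\<dots> \<le> suminf m * w x"
      using m w(2)[OF x] by (intro mult_right_mono sum_le_suminf) auto
    finally show ?thesis .
  qed
  have "(\<lambda>k. integral S (\<lambda>x. \<Sum>n<k. g n x)) \<longlonglongrightarrow> integral S G"
    using int conv integrable_on_cmult_left[OF w(1), of "suminf m"]
    by (intro dominated_convergence(2)[OF _ _ le])
       (auto intro!: integrable_sum simp: sums_def integrable_on_def)
  moreover have "integral S (\<lambda>x. \<Sum>n<k. g n x) = (\<Sum>n<k. I n)" for k
    using int by (subst integral_sum) (auto simp: integrable_on_def intro!: sum.cong integral_unique)
  ultimately show ?thesis by (simp add: sums_def)
qed

lemma summable_powser_of_summable_powr:
  fixes c :: "nat \<Rightarrow> real"
  assumes "\<beta> \<noteq> 0" and "\<And>t. 0 < t \<Longrightarrow> summable (\<lambda>n. c n * (t powr \<beta>) ^ n)"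
  shows "summable (\<lambda>n. c n * x ^ n)"
proof -
  have "summable (\<lambda>n. c n * (\<bar>x\<bar> + 1) ^ n)"
    using assms(2)[of "(\<bar>x\<bar> + 1) powr (1 / \<beta>)"] assms(1) by (simp add: powr_powr)
  then show ?thesis by (rule powser_inside) auto
qed

lemma powser_eq_0_on_pos_imp_coeff0_eq_0:
  fixes c :: "nat \<Rightarrow> real"
  assumes c: "\<And>x. summable (\<lambda>n. c n * x ^ n)" and zero: "\<And>x. 0 < x \<Longrightarrow> (\<Sum>n. c n * x ^ n) = 0"
  shows "c 0 = 0"
proof -
  have "isCont (\<lambda>x. \<Sum>n. c n * x ^ n) 0"
    by (rule DERIV_isCont[OF termdiffs_strong_converges_everywhere[OF c]])
  then have "((\<lambda>x. \<Sum>n. c n * x ^ n) \<longlongrightarrow> c 0) (at_right 0)"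
    by (simp add: isCont_def filterlim_at_split)
  moreover have "((\<lambda>x. \<Sum>n. c n * x ^ n) \<longlongrightarrow> 0) (at_right (0::real))"
    by (rule tendsto_eventually) (use zero in \<open>auto intro: eventually_at_rightI[of 0 1]\<close>)
  ultimately show ?thesis
    using tendsto_unique[OF trivial_limit_at_right_real] by blast
qed

lemma powser_eq_0_on_pos_imp_coeffs_eq_0:
  fixes c :: "nat \<Rightarrow> real"
  assumes "\<And>x. summable (\<lambda>n. c n * x ^ n)" and "\<And>x. 0 < x \<Longrightarrow> (\<Sum>n. c n * x ^ n) = 0"
  shows "c n = 0"
  using assms
proof (induction n arbitrary: c)
  case 0
  then show ?case by (rule powser_eq_0_on_pos_imp_coeff0_eq_0)
next
  case (Suc n)
  have c0: "c 0 = 0" using Suc.prems by (rule powser_eq_0_on_pos_imp_coeff0_eq_0)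
  show ?case
  proof (rule Suc.IH[of "\<lambda>n. c (Suc n)", simplified])
    show "summable (\<lambda>n. c (Suc n) * x ^ n)" for x
      using Suc.prems(1) by (subst summable_powser_split_head)
    show "(\<Sum>n. c (Suc n) * x ^ n) = 0" if "0 < x" for x
      using powser_split_head(1)[OF Suc.prems(1)[of x]] Suc.prems(2)[OF that] c0 that by simp
  qed
qed

lemma linear_recurrence_distinct_roots:
  fixes v :: "nat \<Rightarrow> 'a::field"
  assumes rec: "\<And>n. v (Suc (Suc n)) + A * v (Suc n) + B * v n = 0"
    and roots: "l1 + l2 = - A" "l1 * l2 = B" "l1 \<noteq> l2"
  shows "v n = (v 1 - l2 * v 0) / (l1 - l2) * l1 ^ n + (v 1 - l1 * v 0) / (l2 - l1) * l2 ^ n"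
proof -
  define K1 where "K1 = (v 1 - l2 * v 0) / (l1 - l2)"
  define K2 where "K2 = (l1 * v 0 - v 1) / (l1 - l2)"
  have "l1 - l2 \<noteq> 0" using roots(3) by simp
  have closed_form: "v n = K1 * l1 ^ n + K2 * l2 ^ n" for n
  proof (induction n rule: induct_nat_012)
    case 0
    have "K1 + K2 = (l1 - l2) * v 0 / (l1 - l2)"
      unfolding K1_def K2_def add_divide_distrib[symmetric] by (simp add: algebra_simps)
    then show ?case using \<open>l1 - l2 \<noteq> 0\<close> by simp
  next
    case 1
    have "K1 * l1 + K2 * l2 = (l1 - l2) * v 1 / (l1 - l2)"
      unfolding K1_def K2_def times_divide_eq_left add_divide_distrib[symmetric]
      by (simp add: algebra_simps)
    then show ?case using \<open>l1 - l2 \<noteq> 0\<close> by simp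
  next
    case (ge2 n)
    have A: "A = - (l1 + l2)" by (simp add: roots(1))
    have "v (Suc (Suc n)) = v (Suc (Suc n)) - (v (Suc (Suc n)) + A * v (Suc n) + B * v n)"
      using rec[of n] by simp
    also have "\<dots> = (l1 + l2) * v (Suc n) - l1 * l2 * v n"
      unfolding A roots(2)[symmetric] by (simp add: algebra_simps)
    also have "\<dots> = K1 * l1 ^ Suc (Suc n) + K2 * l2 ^ Suc (Suc n)"
      unfolding ge2 by (simp add: algebra_simps)
    finally show ?case .
  qed
  have K2: "K2 = (v 1 - l1 * v 0) / (l2 - l1)"
    unfolding K2_def by (metis minus_diff_eq minus_divide_divide)
  show ?thesis unfolding closed_form[of n] K2 K1_def ..
qed

lemma linear_recurrence_double_root:
  fixes v :: "nat \<Rightarrow> 'a::field"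
  assumes rec: "\<And>n. v (Suc (Suc n)) + A * v (Suc n) + B * v n = 0"
    and root: "2 * l = - A" "l * l = B"
  shows "v n = v 0 * l ^ n + (v 1 - l * v 0) * (of_nat n * l ^ (n - 1))"
proof -
  define K where "K = v 1 - l * v 0"
  have "v n = v 0 * l ^ n + K * (of_nat n * l ^ (n - 1))" for n
  proof (induction n rule: induct_nat_012)
    case (ge2 n)
    have A: "A = - (2 * l)" by (simp add: root(1))
    have "v (Suc (Suc n)) = v (Suc (Suc n)) - (v (Suc (Suc n)) + A * v (Suc n) + B * v n)"
      using rec[of n] by simp
    also have "\<dots> = 2 * l * v (Suc n) - l * l * v n"
      unfolding A root(2)[symmetric] by (simp add: algebra_simps)
    also have "\<dots> = v 0 * l ^ Suc (Suc n) + K * (of_nat (Suc (Suc n)) * l ^ Suc n)"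
      unfolding ge2 by (cases n) (simp_all add: algebra_simps)
    finally show ?case by simp
  qed (simp_all add: K_def)
  then show ?thesis unfolding K_def .
qed

lemma sums_weighted_two_geometric:
  fixes \<kappa> :: "nat \<Rightarrow> complex" and c :: "nat \<Rightarrow> real"
  assumes E: "\<And>z. (\<lambda>n. \<kappa> n * z ^ n) sums E z"
    and coeffs: "\<And>n. complex_of_real (c n) = \<kappa> n * (K1 * l1 ^ n + K2 * l2 ^ n)"
    and F: "(\<lambda>n. c n * X ^ n) sums F"
  shows "complex_of_real F = K1 * E (l1 * complex_of_real X) + K2 * E (l2 * complex_of_real X)"
proof -
  have "(\<lambda>n. K1 * (\<kappa> n * (l1 * complex_of_real X) ^ n) + K2 * (\<kappa> n * (l2 * complex_of_real X) ^ n))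
      sums (K1 * E (l1 * complex_of_real X) + K2 * E (l2 * complex_of_real X))"
    by (intro sums_add sums_mult E)
  moreover have "(\<lambda>n. complex_of_real (c n * X ^ n)) sums complex_of_real F"
    by (rule sums_of_real[OF F])
  ultimately show ?thesis
    using coeffs by (simp add: power_mult_distrib algebra_simps sums_iff)
qed

lemma sums_weighted_double_root:
  fixes \<kappa> :: "nat \<Rightarrow> complex" and c :: "nat \<Rightarrow> real"
  assumes E: "\<And>z. (\<lambda>n. \<kappa> n * z ^ n) sums E z"
    and E': "\<And>z. (\<lambda>n. diffs \<kappa> n * z ^ n) sums E' z"
    and coeffs: "\<And>n. complex_of_real (c n) = \<kappa> n * (K1 * l ^ n + K2 * (of_nat n * l ^ (n - 1)))"
    and F: "(\<lambda>n. c n * X ^ n) sums F"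
  shows "complex_of_real F = K1 * E (l * complex_of_real X) + K2 * complex_of_real X * E' (l * complex_of_real X)"
proof -
  define g where "g n = \<kappa> n * (of_nat n * l ^ (n - 1)) * complex_of_real X ^ n" for n
  have "(\<lambda>n. g (Suc n)) sums (complex_of_real X * E' (l * complex_of_real X))"
    using sums_mult[OF E', of "complex_of_real X" "l * complex_of_real X"]
    by (simp add: g_def diffs_def power_mult_distrib algebra_simps)
  moreover have "g 0 = 0" by (simp add: g_def)
  ultimately have "g sums (complex_of_real X * E' (l * complex_of_real X))"
    by (simp add: sums_Suc_iff)
  then have "(\<lambda>n. K1 * (\<kappa> n * (l * complex_of_real X) ^ n) + K2 * g n)
      sums (K1 * E (l * complex_of_real X) + K2 * (complex_of_real X * E' (l * complex_of_real X)))"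
    by (intro sums_add sums_mult E)
  moreover have "(\<lambda>n. complex_of_real (c n * X ^ n)) sums complex_of_real F"
    by (rule sums_of_real[OF F])
  ultimately show ?thesis
    using coeffs by (simp add: g_def power_mult_distrib algebra_simps sums_iff)
qed

lemma quadratic_roots_csqrt:
  fixes a b :: real
  defines "\<eta>1 \<equiv> complex_of_real (a / 2) - csqrt (complex_of_real (a\<^sup>2 / 4 - b))"
    and "\<eta>2 \<equiv> complex_of_real (a / 2) + csqrt (complex_of_real (a\<^sup>2 / 4 - b))"
  shows "- \<eta>1 + - \<eta>2 = - complex_of_real a" and "- \<eta>1 * - \<eta>2 = complex_of_real b"
    and "a\<^sup>2 / 4 \<noteq> b \<Longrightarrow> - \<eta>1 \<noteq> - \<eta>2"
    and "b < a\<^sup>2 / 4 \<Longrightarrow> cnj \<eta>1 = \<eta>1 \<and> cnj \<eta>2 = \<eta>2"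
    and "a\<^sup>2 / 4 < b \<Longrightarrow> cnj \<eta>1 = \<eta>2 \<and> cnj \<eta>2 = \<eta>1"
proof -
  define s where "s = csqrt (complex_of_real (a\<^sup>2 / 4 - b))"
  show "- \<eta>1 + - \<eta>2 = - complex_of_real a" by (simp add: \<eta>1_def \<eta>2_def)
  have "- \<eta>1 * - \<eta>2 = complex_of_real (a / 2) ^ 2 - s\<^sup>2"
    unfolding \<eta>1_def \<eta>2_def s_def[symmetric] by (simp add: power2_eq_square algebra_simps)
  also have "\<dots> = complex_of_real b"
    unfolding s_def power2_csqrt by (simp add: power2_eq_square)
  finally show "- \<eta>1 * - \<eta>2 = complex_of_real b" .
  show "- \<eta>1 \<noteq> - \<eta>2" if "a\<^sup>2 / 4 \<noteq> b"
  proof -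
    have "complex_of_real (a\<^sup>2 / 4 - b) \<noteq> 0" using that by (simp only: of_real_eq_0_iff)
    then show ?thesis by (simp add: \<eta>1_def \<eta>2_def del: of_real_diff)
  qed
qed (simp_all add: \<eta>1_def \<eta>2_def)

section \<open>The stretched Caputo operator on power series\<close>

text \<open>The Caputo derivative of order \<alpha> maps \<tau>^(\<beta>k) to
  \<open>caputo_power_coeff \<alpha> \<beta> k\<close> \<tau>^(\<beta>k-\<alpha>).\<close>

definition caputo_power_coeff :: "real \<Rightarrow> real \<Rightarrow> nat \<Rightarrow> real" where
  "caputo_power_coeff \<alpha> \<beta> k = Gamma (\<beta> * real k + 1) / Gamma (\<beta> * real k + 1 - \<alpha>)"

lemma caputo_power_coeff_pos:
  assumes "\<alpha> < 1" and "0 \<le> \<beta>"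
  shows "0 < caputo_power_coeff \<alpha> \<beta> k"
proof -
  have "0 \<le> \<beta> * real k" using assms by simp
  then show ?thesis
    unfolding caputo_power_coeff_def using assms by (intro divide_pos_pos Gamma_real_pos) linarith+
qed

lemma eventually_caputo_power_coeff_ge:
  assumes \<alpha>: "0 < \<alpha>" "\<alpha> \<le> 1" and \<beta>: "0 < \<beta>"
  shows "\<forall>\<^sub>F n in sequentially. B \<le> caputo_power_coeff \<alpha> \<beta> n"
proof -
  define R where "R = (\<bar>B\<bar> + 1) powr (1 / \<alpha>)"
  have "B \<le> caputo_power_coeff \<alpha> \<beta> n" if n: "nat \<lceil>R / \<beta>\<rceil> + 1 \<le> n" for n
  proof -
    have "R / \<beta> \<le> real n" using n by linarith
    then have "R \<le> \<beta> * real n" using \<beta> by (simp add: field_simps)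
    then have "R powr \<alpha> \<le> (\<beta> * real n) powr \<alpha>"
      using \<alpha> by (intro powr_mono2) (auto simp: R_def)
    also have "\<dots> \<le> caputo_power_coeff \<alpha> \<beta> n"
      unfolding caputo_power_coeff_def using \<alpha> \<beta> n by (intro Gamma_ratio_ge_powr) auto
    finally show ?thesis using \<alpha> by (simp add: R_def powr_powr)
  qed
  then show ?thesis unfolding eventually_sequentially by blast
qed

lemma deriv_powser_powr_sums:
  fixes c :: "nat \<Rightarrow> real"
  assumes c: "\<And>x. summable (\<lambda>n. c n * x ^ n)"
    and f: "\<And>\<tau>. 0 < \<tau> \<Longrightarrow> f \<tau> = (\<Sum>n. c n * (\<tau> powr \<beta>) ^ n)" and \<tau>: "0 < \<tau>"
  shows "(\<lambda>n. \<beta> * diffs c n * \<tau> powr (\<beta> * Suc n - 1)) sums deriv f \<tau>"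
proof -
  have "((\<lambda>x. \<Sum>n. c n * x ^ n) has_real_derivative (\<Sum>n. diffs c n * x ^ n)) (at x)" for x
    by (rule termdiffs_strong_converges_everywhere[OF c])
  from DERIV_chain2[OF this has_real_derivative_powr[OF \<tau>]]
  have "(f has_real_derivative (\<Sum>n. diffs c n * (\<tau> powr \<beta>) ^ n) * (\<beta> * \<tau> powr (\<beta> - 1))) (at \<tau>)"
    by (rule has_field_derivative_transform_within_open[where S="{0<..}"]) (use \<tau> f in auto)
  then have "deriv f \<tau> = (\<Sum>n. diffs c n * (\<tau> powr \<beta>) ^ n) * (\<beta> * \<tau> powr (\<beta> - 1))"
    by (rule DERIV_imp_deriv)
  moreover have "(\<lambda>n. diffs c n * (\<tau> powr \<beta>) ^ n * (\<beta> * \<tau> powr (\<beta> - 1)))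
      sums ((\<Sum>n. diffs c n * (\<tau> powr \<beta>) ^ n) * (\<beta> * \<tau> powr (\<beta> - 1)))"
    by (intro sums_mult2 summable_sums termdiff_converges_all c)
  moreover have "diffs c n * (\<tau> powr \<beta>) ^ n * (\<beta> * \<tau> powr (\<beta> - 1)) = \<beta> * diffs c n * \<tau> powr (\<beta> * Suc n - 1)"
    for n
    using \<tau> by (simp add: powr_power powr_add[symmetric] algebra_simps)
  ultimately show ?thesis by simp
qed

lemma integral_caputo_kernel_powser_sums:
  fixes c :: "nat \<Rightarrow> real"
  assumes \<alpha>: "\<alpha> < 1" and \<beta>: "0 < \<beta>" and c: "\<And>x. summable (\<lambda>n. c n * x ^ n)"
    and f: "\<And>\<tau>. 0 < \<tau> \<Longrightarrow> f \<tau> = (\<Sum>n. c n * (\<tau> powr \<beta>) ^ n)" and t: "0 < t"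
  shows "(\<lambda>n. \<beta> * diffs c n * (Beta (\<beta> * Suc n) (1 - \<alpha>) * t powr (\<beta> * Suc n - \<alpha>)))
           sums integral {0<..<t} (\<lambda>\<tau>. deriv f \<tau> / (t - \<tau>) powr \<alpha>)"
proof -
  define g where "g n \<tau> = \<beta> * diffs c n * (\<tau> powr (\<beta> * Suc n - 1) * (t - \<tau>) powr (- \<alpha>))" for n \<tau>
  define w where "w \<tau> = \<tau> powr (\<beta> - 1) * (t - \<tau>) powr (- \<alpha>)" for \<tau>
  show ?thesis
  proof (rule sums_integral_dominated[where g = g and w = w and m = "\<lambda>n. \<beta> * \<bar>diffs c n\<bar> * (t powr \<beta>) ^ n"])
    show "(g n has_integral \<beta> * diffs c n * (Beta (\<beta> * Suc n) (1 - \<alpha>) * t powr (\<beta> * Suc n - \<alpha>))) {0<..<t}"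
      for n
      unfolding g_def has_integral_Icc_iff_Ioo[symmetric] using \<alpha> \<beta> t
      by (intro has_integral_mult_right has_integral_powr_Beta) auto
    show "(\<lambda>n. g n \<tau>) sums (deriv f \<tau> / (t - \<tau>) powr \<alpha>)" if "\<tau> \<in> {0<..<t}" for \<tau>
      using sums_mult2[OF deriv_powser_powr_sums[OF c f], of \<tau> "(t - \<tau>) powr (- \<alpha>)"] that
      by (simp add: g_def powr_minus divide_inverse mult.assoc)
    show "\<bar>g n \<tau>\<bar> \<le> \<beta> * \<bar>diffs c n\<bar> * (t powr \<beta>) ^ n * w \<tau>" if "\<tau> \<in> {0<..<t}" for n \<tau>
    proof -
      have "\<tau> powr (\<beta> * Suc n - 1) = (\<tau> powr \<beta>) ^ n * \<tau> powr (\<beta> - 1)"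
        using that by (simp add: powr_power powr_add[symmetric] algebra_simps)
      moreover have "(\<tau> powr \<beta>) ^ n \<le> (t powr \<beta>) ^ n"
        using that \<beta> by (intro power_mono powr_mono2) auto
      ultimately show ?thesis
        using \<beta> by (simp add: g_def w_def abs_mult mult_left_mono mult_right_mono)
    qed
    have "summable (\<lambda>n. norm (diffs c n * (t powr \<beta>) ^ n))"
      by (rule powser_insidea[OF termdiff_converges_all[OF c, of "t powr \<beta> + 1"]]) auto
    then show "summable (\<lambda>n. \<beta> * \<bar>diffs c n\<bar> * (t powr \<beta>) ^ n)"
      by (simp add: abs_mult mult.assoc summable_mult)
    show "w integrable_on {0<..<t}"
      unfolding w_def integrable_on_def has_integral_Icc_iff_Ioo[symmetric]
      using has_integral_powr_Beta[OF \<beta> \<alpha> t] by blast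
  qed (use \<beta> in \<open>auto simp: w_def\<close>)
qed

lemma caputo_powser_powr_sums:
  fixes c :: "nat \<Rightarrow> real"
  assumes \<alpha>: "\<alpha> < 1" and \<beta>: "0 < \<beta>" and c: "\<And>x. summable (\<lambda>n. c n * x ^ n)"
    and f: "\<And>\<tau>. 0 < \<tau> \<Longrightarrow> f \<tau> = (\<Sum>n. c n * (\<tau> powr \<beta>) ^ n)" and t: "0 < t"
  shows "(\<lambda>n. caputo_power_coeff \<alpha> \<beta> (Suc n) * c (Suc n) * t powr (\<beta> * Suc n - \<alpha>))
           sums caputo \<alpha> f t"
proof -
  from sums_mult[OF integral_caputo_kernel_powser_sums[OF assms], of "1 / Gamma (1 - \<alpha>)"]
  have "(\<lambda>n. 1 / Gamma (1 - \<alpha>) * (\<beta> * diffs c n * (Beta (\<beta> * Suc n) (1 - \<alpha>) * t powr (\<beta> * Suc n - \<alpha>))))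
      sums caputo \<alpha> f t"
    by (simp add: caputo_def integral_open_interval_real)
  moreover have "1 / Gamma (1 - \<alpha>) * (\<beta> * diffs c n * (Beta (\<beta> * Suc n) (1 - \<alpha>) * t powr (\<beta> * Suc n - \<alpha>)))
      = caputo_power_coeff \<alpha> \<beta> (Suc n) * c (Suc n) * t powr (\<beta> * Suc n - \<alpha>)" for n
  proof -
    have "\<beta> * Suc n * Beta (\<beta> * Suc n) (1 - \<alpha>) / Gamma (1 - \<alpha>) = caputo_power_coeff \<alpha> \<beta> (Suc n)"
      unfolding caputo_power_coeff_def using \<alpha> \<beta> by (intro Beta_mult_div_Gamma) auto
    from this[symmetric] show ?thesis
      unfolding diffs_def by (simp add: field_simps del: of_nat_Suc)
  qed
  ultimately show ?thesis by simp
qed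

definition stretched_coeffs :: "real \<Rightarrow> real \<Rightarrow> (nat \<Rightarrow> real) \<Rightarrow> nat \<Rightarrow> real" where
  "stretched_coeffs \<alpha> \<gamma> c n = caputo_power_coeff \<alpha> (\<alpha> + \<gamma>) (Suc n) * c (Suc n)"

lemma stretched_powser_sums:
  fixes c :: "nat \<Rightarrow> real"
  assumes \<alpha>: "\<alpha> < 1" and \<alpha>\<gamma>: "0 < \<alpha> + \<gamma>" and c: "\<And>x. summable (\<lambda>n. c n * x ^ n)"
    and f: "\<And>\<tau>. 0 < \<tau> \<Longrightarrow> f \<tau> = (\<Sum>n. c n * (\<tau> powr (\<alpha> + \<gamma>)) ^ n)" and t: "0 < t"
  shows "(\<lambda>n. stretched_coeffs \<alpha> \<gamma> c n * (t powr (\<alpha> + \<gamma>)) ^ n) sums stretched \<alpha> \<gamma> f t"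
proof -
  note sums_mult2[OF caputo_powser_powr_sums[OF \<alpha> \<alpha>\<gamma> c f t], of "t powr (- \<gamma>)"]
  moreover have "t powr ((\<alpha> + \<gamma>) * Suc n - \<alpha>) * t powr (- \<gamma>) = (t powr (\<alpha> + \<gamma>)) ^ n" for n
  proof -
    have "t powr ((\<alpha> + \<gamma>) * Suc n - \<alpha>) * t powr (- \<gamma>) = t powr (real n * (\<alpha> + \<gamma>))"
      by (simp add: powr_add[symmetric] algebra_simps)
    then show ?thesis using t by (simp add: powr_power)
  qed
  ultimately show ?thesis
    by (simp add: stretched_def stretched_coeffs_def mult.assoc mult.commute[of "caputo _ _ _"])
qed

lemma stretched_powser:
  fixes c :: "nat \<Rightarrow> real"
  assumes \<alpha>: "\<alpha> < 1" and \<alpha>\<gamma>: "0 < \<alpha> + \<gamma>" and c: "\<And>x. summable (\<lambda>n. c n * x ^ n)"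
    and f: "\<And>\<tau>. 0 < \<tau> \<Longrightarrow> f \<tau> = (\<Sum>n. c n * (\<tau> powr (\<alpha> + \<gamma>)) ^ n)"
  shows "summable (\<lambda>n. stretched_coeffs \<alpha> \<gamma> c n * x ^ n)"
    and "\<And>t. 0 < t \<Longrightarrow> stretched \<alpha> \<gamma> f t = (\<Sum>n. stretched_coeffs \<alpha> \<gamma> c n * (t powr (\<alpha> + \<gamma>)) ^ n)"
proof -
  show "summable (\<lambda>n. stretched_coeffs \<alpha> \<gamma> c n * x ^ n)"
    by (rule summable_powser_of_summable_powr[of "\<alpha> + \<gamma>"])
       (use \<alpha>\<gamma> stretched_powser_sums[OF \<alpha> \<alpha>\<gamma> c f] in \<open>auto intro: sums_summable\<close>)
  show "stretched \<alpha> \<gamma> f t = (\<Sum>n. stretched_coeffs \<alpha> \<gamma> c n * (t powr (\<alpha> + \<gamma>)) ^ n)"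
    if "0 < t" for t
    using stretched_powser_sums[OF \<alpha> \<alpha>\<gamma> c f that] by (simp add: sums_iff)
qed

lemma ode_powser_coeffs:
  fixes c :: "nat \<Rightarrow> real"
  assumes \<alpha>: "\<alpha> < 1" and \<alpha>\<gamma>: "0 < \<alpha> + \<gamma>"
    and series: "\<forall>t>0. (\<lambda>n. c n * (t powr (\<alpha> + \<gamma>)) ^ n) sums f t"
    and ode: "\<forall>t>0. stretched \<alpha> \<gamma> (stretched \<alpha> \<gamma> f) t + a * stretched \<alpha> \<gamma> f t + b * f t = 0"
  shows "stretched_coeffs \<alpha> \<gamma> (stretched_coeffs \<alpha> \<gamma> c) n + a * stretched_coeffs \<alpha> \<gamma> c n + b * c n = 0"
proof -
  define d where "d = stretched_coeffs \<alpha> \<gamma> c"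
  define e where "e = stretched_coeffs \<alpha> \<gamma> d"
  have c: "summable (\<lambda>n. c n * x ^ n)" for x
    by (rule summable_powser_of_summable_powr[of "\<alpha> + \<gamma>"])
       (use \<alpha>\<gamma> series in \<open>auto intro: sums_summable\<close>)
  have f: "\<And>\<tau>. 0 < \<tau> \<Longrightarrow> f \<tau> = (\<Sum>n. c n * (\<tau> powr (\<alpha> + \<gamma>)) ^ n)"
    using series by (simp add: sums_iff)
  have D: "summable (\<lambda>n. d n * x ^ n)"
    "\<And>t. 0 < t \<Longrightarrow> stretched \<alpha> \<gamma> f t = (\<Sum>n. d n * (t powr (\<alpha> + \<gamma>)) ^ n)" for x
    unfolding d_def by (rule stretched_powser[OF \<alpha> \<alpha>\<gamma> c f], assumption)+
  have E: "summable (\<lambda>n. e n * x ^ n)"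
    "\<And>t. 0 < t \<Longrightarrow> stretched \<alpha> \<gamma> (stretched \<alpha> \<gamma> f) t = (\<Sum>n. e n * (t powr (\<alpha> + \<gamma>)) ^ n)" for x
    unfolding e_def by (rule stretched_powser[OF \<alpha> \<alpha>\<gamma> D], assumption)+
  have combine: "(\<lambda>n. (e n + a * d n + b * c n) * x ^ n)
      sums ((\<Sum>n. e n * x ^ n) + a * (\<Sum>n. d n * x ^ n) + b * (\<Sum>n. c n * x ^ n))" for x
  proof -
    have "(\<lambda>n. e n * x ^ n + a * (d n * x ^ n) + b * (c n * x ^ n))
        sums ((\<Sum>n. e n * x ^ n) + a * (\<Sum>n. d n * x ^ n) + b * (\<Sum>n. c n * x ^ n))"
      using E(1) D(1) c by (intro sums_add sums_mult summable_sums)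
    then show ?thesis by (simp only: distrib_right mult.assoc)
  qed
  have zero: "(\<Sum>n. (e n + a * d n + b * c n) * x ^ n) = 0" if "0 < x" for x
  proof -
    define t where "t = x powr (1 / (\<alpha> + \<gamma>))"
    have t: "0 < t" "t powr (\<alpha> + \<gamma>) = x" using that \<alpha>\<gamma> by (auto simp: t_def powr_powr)
    have "stretched \<alpha> \<gamma> (stretched \<alpha> \<gamma> f) t + a * stretched \<alpha> \<gamma> f t + b * f t = 0"
      using ode t(1) by blast
    from this[unfolded D(2)[OF t(1)] E(2)[OF t(1)] f[OF t(1)] t(2)] show ?thesis
      using combine[of x] by (simp add: sums_iff)
  qed
  have "e n + a * d n + b * c n = 0"
    by (rule powser_eq_0_on_pos_imp_coeffs_eq_0[of "\<lambda>n. e n + a * d n + b * c n"])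
       (use combine zero in \<open>auto intro: sums_summable\<close>)
  then show ?thesis by (simp add: d_def e_def)
qed

section \<open>Kilbas-Saigo coefficients\<close>

lemma ks_coeff_eq_prod:
  assumes "\<alpha> \<noteq> 0"
  shows "ks_coeff \<alpha> (1 + \<gamma> / \<alpha>) (\<gamma> / \<alpha>) n = (\<Prod>k=1..n. 1 / caputo_power_coeff \<alpha> (\<alpha> + \<gamma>) k)"
  unfolding ks_coeff_def
proof (intro prod.cong refl)
  fix k :: nat
  have num: "1 + \<alpha> * ((real k - 1) * (1 + \<gamma> / \<alpha>) + \<gamma> / \<alpha>) = (\<alpha> + \<gamma>) * real k + 1 - \<alpha>"
    and den: "1 + \<alpha> * ((real k - 1) * (1 + \<gamma> / \<alpha>) + \<gamma> / \<alpha> + 1) = (\<alpha> + \<gamma>) * real k + 1"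
    using assms by (simp_all add: field_simps)
  show "Gamma (1 + \<alpha> * ((real k - 1) * (1 + \<gamma> / \<alpha>) + \<gamma> / \<alpha>))
      / Gamma (1 + \<alpha> * ((real k - 1) * (1 + \<gamma> / \<alpha>) + \<gamma> / \<alpha> + 1))
      = 1 / caputo_power_coeff \<alpha> (\<alpha> + \<gamma>) k"
    unfolding num den caputo_power_coeff_def by simp
qed

lemma ks_coeff_Suc:
  assumes "\<alpha> \<noteq> 0"
  shows "ks_coeff \<alpha> (1 + \<gamma> / \<alpha>) (\<gamma> / \<alpha>) (Suc n)
       = ks_coeff \<alpha> (1 + \<gamma> / \<alpha>) (\<gamma> / \<alpha>) n / caputo_power_coeff \<alpha> (\<alpha> + \<gamma>) (Suc n)"
  using assms by (simp add: ks_coeff_eq_prod prod.cl_ivl_Suc)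

lemma ks_coeff_pos:
  assumes "0 < \<alpha>" "\<alpha> < 1" "0 < \<alpha> + \<gamma>"
  shows "0 < ks_coeff \<alpha> (1 + \<gamma> / \<alpha>) (\<gamma> / \<alpha>) n"
  using assms caputo_power_coeff_pos[of \<alpha> "\<alpha> + \<gamma>"] by (simp add: ks_coeff_eq_prod prod_pos)

lemma summable_ks_coeff_powser:
  assumes \<alpha>: "0 < \<alpha>" "\<alpha> < 1" and \<alpha>\<gamma>: "0 < \<alpha> + \<gamma>"
  shows "summable (\<lambda>n. complex_of_real (ks_coeff \<alpha> (1 + \<gamma> / \<alpha>) (\<gamma> / \<alpha>) n) * z ^ n)"
proof -
  let ?\<kappa> = "ks_coeff \<alpha> (1 + \<gamma> / \<alpha>) (\<gamma> / \<alpha>)"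
  obtain N where N: "\<And>n. N \<le> n \<Longrightarrow> 2 * norm z \<le> caputo_power_coeff \<alpha> (\<alpha> + \<gamma>) n"
    using eventually_caputo_power_coeff_ge[of \<alpha> "\<alpha> + \<gamma>" "2 * norm z"] \<alpha> \<alpha>\<gamma>
    by (auto simp: eventually_sequentially)
  show ?thesis
  proof (rule summable_ratio_test[of "1 / 2" N])
    fix n assume "N \<le> n"
    define C where "C = caputo_power_coeff \<alpha> (\<alpha> + \<gamma>) (Suc n)"
    have C: "0 < C" "norm z / C \<le> 1 / 2"
      using caputo_power_coeff_pos[of \<alpha> "\<alpha> + \<gamma>"] N[of "Suc n"] \<open>N \<le> n\<close> \<alpha> \<alpha>\<gamma>
      by (auto simp: C_def field_simps)
    have \<kappa>: "0 < ?\<kappa> n" by (rule ks_coeff_pos[OF \<alpha> \<alpha>\<gamma>])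
    have "?\<kappa> (Suc n) = ?\<kappa> n / C" using \<alpha> by (simp add: ks_coeff_Suc C_def)
    then have "norm (complex_of_real (?\<kappa> (Suc n)) * z ^ Suc n) = ?\<kappa> n / C * (norm z * norm z ^ n)"
      using \<kappa> C by (simp add: norm_mult norm_power norm_divide)
    also have "\<dots> = ?\<kappa> n * norm z ^ n * (norm z / C)"
      by simp
    also have "\<dots> \<le> ?\<kappa> n * norm z ^ n * (1 / 2)"
      using \<kappa> C by (intro mult_left_mono) auto
    also have "\<dots> = 1 / 2 * norm (complex_of_real (?\<kappa> n) * z ^ n)"
      using \<kappa> by (simp add: norm_mult norm_power)
    finally show "norm (complex_of_real (?\<kappa> (Suc n)) * z ^ Suc n)
        \<le> 1 / 2 * norm (complex_of_real (?\<kappa> n) * z ^ n)" .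
  qed simp
qed

lemma kilbas_saigo_sums:
  assumes "0 < \<alpha>" "\<alpha> < 1" "0 < \<alpha> + \<gamma>"
  shows "(\<lambda>n. complex_of_real (ks_coeff \<alpha> (1 + \<gamma> / \<alpha>) (\<gamma> / \<alpha>) n) * z ^ n)
           sums kilbas_saigo \<alpha> (1 + \<gamma> / \<alpha>) (\<gamma> / \<alpha>) z"
  unfolding kilbas_saigo_def by (rule summable_sums[OF summable_ks_coeff_powser[OF assms]])

lemma kilbas_saigo_deriv_sums:
  assumes "0 < \<alpha>" "\<alpha> < 1" "0 < \<alpha> + \<gamma>"
  shows "(\<lambda>n. diffs (\<lambda>n. complex_of_real (ks_coeff \<alpha> (1 + \<gamma> / \<alpha>) (\<gamma> / \<alpha>) n)) n * z ^ n)
           sums kilbas_saigo_deriv \<alpha> (1 + \<gamma> / \<alpha>) (\<gamma> / \<alpha>) z"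
proof -
  note summable = summable_ks_coeff_powser[OF assms]
  have "deriv (kilbas_saigo \<alpha> (1 + \<gamma> / \<alpha>) (\<gamma> / \<alpha>)) z
      = (\<Sum>n. diffs (\<lambda>n. complex_of_real (ks_coeff \<alpha> (1 + \<gamma> / \<alpha>) (\<gamma> / \<alpha>) n)) n * z ^ n)"
    unfolding kilbas_saigo_def[abs_def]
    by (rule DERIV_imp_deriv[OF termdiffs_strong_converges_everywhere[OF summable]])
  then show ?thesis
    unfolding kilbas_saigo_deriv_def using summable_sums[OF termdiff_converges_all[OF summable]] by simp
qed

lemma ks_normalized_recurrence:
  fixes c :: "nat \<Rightarrow> real"
  assumes \<alpha>: "0 < \<alpha>" "\<alpha> < 1" and \<alpha>\<gamma>: "0 < \<alpha> + \<gamma>"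
    and coeffs: "\<And>n. stretched_coeffs \<alpha> \<gamma> (stretched_coeffs \<alpha> \<gamma> c) n + a * stretched_coeffs \<alpha> \<gamma> c n
                      + b * c n = 0"
  shows "c (Suc (Suc n)) / ks_coeff \<alpha> (1 + \<gamma> / \<alpha>) (\<gamma> / \<alpha>) (Suc (Suc n))
       + a * (c (Suc n) / ks_coeff \<alpha> (1 + \<gamma> / \<alpha>) (\<gamma> / \<alpha>) (Suc n))
       + b * (c n / ks_coeff \<alpha> (1 + \<gamma> / \<alpha>) (\<gamma> / \<alpha>) n) = 0"
proof -
  let ?\<kappa> = "ks_coeff \<alpha> (1 + \<gamma> / \<alpha>) (\<gamma> / \<alpha>)" and ?C = "caputo_power_coeff \<alpha> (\<alpha> + \<gamma>)"
  have pos: "0 < ?\<kappa> n" "0 < ?C (Suc n)" "0 < ?C (Suc (Suc n))"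
    using ks_coeff_pos[OF \<alpha> \<alpha>\<gamma>] caputo_power_coeff_pos[of \<alpha> "\<alpha> + \<gamma>"] \<alpha> \<alpha>\<gamma> by auto
  have \<kappa>_Suc: "?\<kappa> (Suc n) = ?\<kappa> n / ?C (Suc n)"
    and \<kappa>_Suc_Suc: "?\<kappa> (Suc (Suc n)) = ?\<kappa> n / (?C (Suc n) * ?C (Suc (Suc n)))"
    using \<alpha> by (simp_all add: ks_coeff_Suc)
  have "c (Suc (Suc n)) / ?\<kappa> (Suc (Suc n)) + a * (c (Suc n) / ?\<kappa> (Suc n)) + b * (c n / ?\<kappa> n)
      = (stretched_coeffs \<alpha> \<gamma> (stretched_coeffs \<alpha> \<gamma> c) n + a * stretched_coeffs \<alpha> \<gamma> c n + b * c n) / ?\<kappa> n"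
    unfolding \<kappa>_Suc \<kappa>_Suc_Suc using pos by (simp add: stretched_coeffs_def field_simps)
  then show ?thesis using coeffs[of n] by simp
qed

section \<open>Power series solutions\<close>

lemma ode_powser_solution_distinct_roots:
  fixes c :: "nat \<Rightarrow> real" and l1 l2 :: complex
  assumes \<alpha>: "0 < \<alpha>" "\<alpha> < 1" and \<alpha>\<gamma>: "0 < \<alpha> + \<gamma>"
    and series: "\<forall>t>0. (\<lambda>n. c n * (t powr (\<alpha> + \<gamma>)) ^ n) sums f t"
    and ode: "\<forall>t>0. stretched \<alpha> \<gamma> (stretched \<alpha> \<gamma> f) t + a * stretched \<alpha> \<gamma> f t + b * f t = 0"
    and roots: "l1 + l2 = - complex_of_real a" "l1 * l2 = complex_of_real b" "l1 \<noteq> l2"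
    and t: "0 < t"
  shows "complex_of_real (f t)
      = (complex_of_real (caputo_power_coeff \<alpha> (\<alpha> + \<gamma>) 1 * c 1) - l2 * complex_of_real (c 0)) / (l1 - l2)
          * kilbas_saigo \<alpha> (1 + \<gamma> / \<alpha>) (\<gamma> / \<alpha>) (l1 * complex_of_real (t powr (\<alpha> + \<gamma>)))
      + (complex_of_real (caputo_power_coeff \<alpha> (\<alpha> + \<gamma>) 1 * c 1) - l1 * complex_of_real (c 0)) / (l2 - l1)
          * kilbas_saigo \<alpha> (1 + \<gamma> / \<alpha>) (\<gamma> / \<alpha>) (l2 * complex_of_real (t powr (\<alpha> + \<gamma>)))"
proof -
  let ?\<kappa> = "ks_coeff \<alpha> (1 + \<gamma> / \<alpha>) (\<gamma> / \<alpha>)"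
  define v where "v n = complex_of_real (c n / ?\<kappa> n)" for n
  have "v (Suc (Suc n)) + complex_of_real a * v (Suc n) + complex_of_real b * v n = 0" for n
    using arg_cong[OF ks_normalized_recurrence[OF \<alpha> \<alpha>\<gamma> ode_powser_coeffs[OF \<alpha>(2) \<alpha>\<gamma> series ode]],
        of complex_of_real n]
    by (simp add: v_def)
  note closed_form = linear_recurrence_distinct_roots[where v = v, OF this roots]
  have coeffs: "complex_of_real (c n) = complex_of_real (?\<kappa> n)
      * ((v 1 - l2 * v 0) / (l1 - l2) * l1 ^ n + (v 1 - l1 * v 0) / (l2 - l1) * l2 ^ n)" for n
  proof -
    have "complex_of_real (c n) = complex_of_real (?\<kappa> n) * v n"
      using ks_coeff_pos[OF \<alpha> \<alpha>\<gamma>, of n] by (simp add: v_def)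
    then show ?thesis by (simp only: closed_form[of n])
  qed
  have "v 0 = complex_of_real (c 0)" "v 1 = complex_of_real (caputo_power_coeff \<alpha> (\<alpha> + \<gamma>) 1 * c 1)"
    using \<alpha> ks_coeff_Suc[of \<alpha> \<gamma> 0] by (simp_all add: v_def ks_coeff_def)
  with sums_weighted_two_geometric[OF kilbas_saigo_sums[OF \<alpha> \<alpha>\<gamma>] coeffs series[rule_format, OF t]]
  show ?thesis by simp
qed

lemma ode_powser_solution_double_root:
  fixes c :: "nat \<Rightarrow> real" and l :: real
  assumes \<alpha>: "0 < \<alpha>" "\<alpha> < 1" and \<alpha>\<gamma>: "0 < \<alpha> + \<gamma>"
    and series: "\<forall>t>0. (\<lambda>n. c n * (t powr (\<alpha> + \<gamma>)) ^ n) sums f t"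
    and ode: "\<forall>t>0. stretched \<alpha> \<gamma> (stretched \<alpha> \<gamma> f) t + a * stretched \<alpha> \<gamma> f t + b * f t = 0"
    and root: "2 * l = - a" "l * l = b"
    and t: "0 < t"
  shows "complex_of_real (f t)
      = complex_of_real (c 0)
          * kilbas_saigo \<alpha> (1 + \<gamma> / \<alpha>) (\<gamma> / \<alpha>) (complex_of_real l * complex_of_real (t powr (\<alpha> + \<gamma>)))
      + complex_of_real (caputo_power_coeff \<alpha> (\<alpha> + \<gamma>) 1 * c 1 - l * c 0) * complex_of_real (t powr (\<alpha> + \<gamma>))
          * kilbas_saigo_deriv \<alpha> (1 + \<gamma> / \<alpha>) (\<gamma> / \<alpha>) (complex_of_real l * complex_of_real (t powr (\<alpha> + \<gamma>)))"
proof -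
  let ?\<kappa> = "ks_coeff \<alpha> (1 + \<gamma> / \<alpha>) (\<gamma> / \<alpha>)"
  define v where "v n = c n / ?\<kappa> n" for n
  note rec = ks_normalized_recurrence[OF \<alpha> \<alpha>\<gamma> ode_powser_coeffs[OF \<alpha>(2) \<alpha>\<gamma> series ode], folded v_def]
  note closed_form = linear_recurrence_double_root[where v = v, OF rec root]
  have coeffs: "complex_of_real (c n) = complex_of_real (?\<kappa> n) * (complex_of_real (v 0) * complex_of_real l ^ n
      + complex_of_real (v 1 - l * v 0) * (of_nat n * complex_of_real l ^ (n - 1)))" for n
  proof -
    have "c n = ?\<kappa> n * v n"
      using ks_coeff_pos[OF \<alpha> \<alpha>\<gamma>, of n] by (simp add: v_def)
    then show ?thesis by (simp add: closed_form[of n])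
  qed
  have "v 0 = c 0" "v 1 = caputo_power_coeff \<alpha> (\<alpha> + \<gamma>) 1 * c 1"
    using \<alpha> ks_coeff_Suc[of \<alpha> \<gamma> 0] by (simp_all add: v_def ks_coeff_def)
  with sums_weighted_double_root[OF kilbas_saigo_sums[OF \<alpha> \<alpha>\<gamma>] kilbas_saigo_deriv_sums[OF \<alpha> \<alpha>\<gamma>]
      coeffs series[rule_format, OF t]]
  show ?thesis by simp
qed

theorem mainTheorem7:
  fixes \<alpha> \<gamma> a b :: real and f :: "real \<Rightarrow> real" and fc :: "nat \<Rightarrow> real"
    and \<eta>1 \<eta>2 :: complex and E E1 :: "complex \<Rightarrow> complex"
  assumes "0 < \<alpha>" "\<alpha> < 1" "\<alpha> + \<gamma> > 0" "a > 0" "b > 0"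
    and series: "\<forall>t>0. (\<lambda>n. fc n * (t powr (\<alpha> + \<gamma>)) ^ n) sums f t"
    and ode: "\<forall>t>0. stretched \<alpha> \<gamma> (stretched \<alpha> \<gamma> f) t + a * stretched \<alpha> \<gamma> f t + b * f t = 0"
  defines "\<eta>1 \<equiv> complex_of_real (a / 2) - csqrt (complex_of_real (a\<^sup>2 / 4 - b))"
    and "\<eta>2 \<equiv> complex_of_real (a / 2) + csqrt (complex_of_real (a\<^sup>2 / 4 - b))"
    and "E \<equiv> kilbas_saigo \<alpha> (1 + \<gamma> / \<alpha>) (\<gamma> / \<alpha>)"
    and "E1 \<equiv> kilbas_saigo_deriv \<alpha> (1 + \<gamma> / \<alpha>) (\<gamma> / \<alpha>)"
  shows "(a\<^sup>2 / 4 > b \<longrightarrow>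
            (\<exists>K1 K2 :: real. \<forall>t>0. complex_of_real (f t) =
               complex_of_real K1 * E (- \<eta>1 * complex_of_real (t powr (\<alpha> + \<gamma>)))
             + complex_of_real K2 * E (- \<eta>2 * complex_of_real (t powr (\<alpha> + \<gamma>)))))
       \<and> (a\<^sup>2 / 4 < b \<longrightarrow>
            (\<exists>K1 K2 :: complex. K1 = cnj K2 \<and> (\<forall>t>0. complex_of_real (f t) =
               K1 * E (- \<eta>1 * complex_of_real (t powr (\<alpha> + \<gamma>)))
             + K2 * E (- \<eta>2 * complex_of_real (t powr (\<alpha> + \<gamma>))))))
       \<and> (b = a\<^sup>2 / 4 \<longrightarrow>
            (\<exists>K1 K2 :: real. \<forall>t>0. complex_of_real (f t) =
               complex_of_real K1 * E (- complex_of_real (a / 2) * complex_of_real (t powr (\<alpha> + \<gamma>)))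
             + complex_of_real K2 * complex_of_real (t powr (\<alpha> + \<gamma>))
                 * E1 (- complex_of_real (a / 2) * complex_of_real (t powr (\<alpha> + \<gamma>)))))"
proof -
  note \<alpha> = \<open>0 < \<alpha>\<close> \<open>\<alpha> < 1\<close> and \<alpha>\<gamma> = \<open>0 < \<alpha> + \<gamma>\<close>
  note roots = quadratic_roots_csqrt[where a = a and b = b, folded \<eta>1_def \<eta>2_def]
  let ?X = "\<lambda>t. complex_of_real (t powr (\<alpha> + \<gamma>))"
  let ?K = "\<lambda>l m. (complex_of_real (caputo_power_coeff \<alpha> (\<alpha> + \<gamma>) 1 * fc 1) - m * complex_of_real (fc 0)) / (l - m)"
  have distinct: "\<forall>t>0. complex_of_real (f t)
      = ?K (- \<eta>1) (- \<eta>2) * E (- \<eta>1 * ?X t) + ?K (- \<eta>2) (- \<eta>1) * E (- \<eta>2 * ?X t)"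
    if "a\<^sup>2 / 4 \<noteq> b"
    unfolding E_def using ode_powser_solution_distinct_roots[OF \<alpha> \<alpha>\<gamma> series ode roots(1,2) roots(3)[OF that]]
    by blast
  show ?thesis
  proof (intro conjI impI)
    assume "b < a\<^sup>2 / 4"
    with roots(4)[OF this] have "?K (- \<eta>1) (- \<eta>2) \<in> \<real>" "?K (- \<eta>2) (- \<eta>1) \<in> \<real>"
      by (simp_all add: Reals_cnj_iff)
    then obtain K1 K2 where K: "?K (- \<eta>1) (- \<eta>2) = complex_of_real K1" "?K (- \<eta>2) (- \<eta>1) = complex_of_real K2"
      by (auto elim!: Reals_cases)
    have "a\<^sup>2 / 4 \<noteq> b" using \<open>b < a\<^sup>2 / 4\<close> by simp
    from distinct[OF this, unfolded K] show "\<exists>K1 K2 :: real. \<forall>t>0. complex_of_real (f t) =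
        complex_of_real K1 * E (- \<eta>1 * ?X t) + complex_of_real K2 * E (- \<eta>2 * ?X t)"
      by blast
  next
    assume "a\<^sup>2 / 4 < b"
    with roots(5)[OF this] have "?K (- \<eta>1) (- \<eta>2) = cnj (?K (- \<eta>2) (- \<eta>1))" by simp
    moreover have "a\<^sup>2 / 4 \<noteq> b" using \<open>a\<^sup>2 / 4 < b\<close> by simp
    ultimately show "\<exists>K1 K2 :: complex. K1 = cnj K2 \<and> (\<forall>t>0. complex_of_real (f t) =
        K1 * E (- \<eta>1 * ?X t) + K2 * E (- \<eta>2 * ?X t))"
      using distinct by blast
  next
    assume "b = a\<^sup>2 / 4"
    then have "2 * (- a / 2) = - a" "- a / 2 * (- a / 2) = b" by (simp_all add: power2_eq_square)
    note double = ode_powser_solution_double_root[OF \<alpha> \<alpha>\<gamma> series ode this]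
    have "complex_of_real (- a / 2) = - complex_of_real (a / 2)" by simp
    from double[unfolded this] show "\<exists>K1 K2 :: real. \<forall>t>0. complex_of_real (f t) =
        complex_of_real K1 * E (- complex_of_real (a / 2) * ?X t)
      + complex_of_real K2 * ?X t * E1 (- complex_of_real (a / 2) * ?X t)"
      unfolding E_def E1_def by blast
  qed
qed

end
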